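(* Let $\mathcal R$ be a commutative ring and $\mathcal A$ an associative $\mathcal R$-algebra (not necessarily with identity) together with pairwise orthogonal idempotents $e_i$ ($i\in I$) such that $\mathcal A=\bigoplus_{i,i'\in I}e_i\mathcal Ae_{i'}$ and each $e_i\mathcal Ae_{i'}$ is a free $\mathcal R$-module. Let $\mathcal B=\{a_j\}_{j\in J}$ be an $\mathcal R$-basis of $\mathcal A$ such that, for all $i,i'$, the nonzero elements among $\{e_ia_je_{i'}\}_{j\in J}$ form a basis of $e_i\mathcal Ae_{i'}$, $\mathcal B=\bigcup_{i,i'}e_i\mathcal Be_{i'}$, and every $e_i$ lies in $\mathcal B$; for $j\in J$ let $ro(j),co(j)\in I$ be the unique indices with $e_{ro(j)}a_j=a_j$ and $a_je_{co(j)}=a_j$. Let $\mathfrak L$ be the set of formal (possibly infinite) linear combinations $f=\sum_{j\in J}f_ja_j$, $f_j\in\mathcal R$, and for $i\in I$ set $J(e_i,f)=\{j:f_j\ne0,\ ro(j)=i\}$, $J(f,e_i)=\{j:f_j\ne0,\ co(j)=i\}$. Define $${}^\dagger\widehat{\mathcal A}=\{f\in\mathfrak L:|J(e_i,f)|<\infty\ \forall i\},\quad \widehat{\mathcal A}^\dagger=\{f\in\mathfrak L:|J(f,e_i)|<\infty\ \forall i\},\quad \widehat{\mathcal A}={}^\dagger\widehat{\mathcal A}\cap\widehat{\mathcal A}^\dagger,$$ with product $\bigl(\sum_sf_sa_s\bigr)\bigl(\sum_tg_ta_t\bigr)=\sum_{s,t}f_sg_t\,a_sa_t$ (products $a_sa_t$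 computed in $\mathcal A$). Then this product is well defined on ${}^\dagger\widehat{\mathcal A}$ and on $\widehat{\mathcal A}^\dagger$, making each of them an associative $\mathcal R$-algebra with identity $1=\sum_{i\in I}e_i$, and $\widehat{\mathcal A}$ is a subalgebra with the same identity. *)

theory Defs
  imports Main
begin

text \<open>An associative (not necessarily unital) algebra over a commutative ring 'r:
  the carrier is the type 'a of class ring (Isabelle's class ring has no unit),
  and sm is the scalar multiplication.\<close>
definition algebra_over :: "('r::comm_ring_1 \<Rightarrow> 'a::ring \<Rightarrow> 'a) \<Rightarrow> bool" where
  "algebra_over sm \<longleftrightarrow>
     (\<forall>r s x. sm (r + s) x = sm r x + sm s x) \<and>
     (\<forall>r x y. sm r (x + y) = sm r x + sm r y) \<and>
     (\<forall>r s x. sm (r * s) x = sm r (sm s x)) \<and>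
     (\<forall>x. sm 1 x = x) \<and>
     (\<forall>r x y. sm r (x * y) = sm r x * y) \<and>
     (\<forall>r x y. sm r (x * y) = x * sm r y)"

definition lincomb :: "('r::comm_ring_1 \<Rightarrow> 'a::ring \<Rightarrow> 'a) \<Rightarrow> ('j \<Rightarrow> 'a) \<Rightarrow> ('j \<Rightarrow> 'r) \<Rightarrow> 'j set \<Rightarrow> 'a" where
  "lincomb sm f c K = (\<Sum>j\<in>{j\<in>K. c j \<noteq> 0}. sm (c j) (f j))"

definition indep_fam :: "('r::comm_ring_1 \<Rightarrow> 'a::ring \<Rightarrow> 'a) \<Rightarrow> ('j \<Rightarrow> 'a) \<Rightarrow> 'j set \<Rightarrow> bool" where
  "indep_fam sm f K \<longleftrightarrow>
     (\<forall>c. finite {j\<in>K. c j \<noteq> 0} \<and> lincomb sm f c K = 0 \<longrightarrow> (\<forall>j\<in>K. c j = 0))"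

definition span_fam :: "('r::comm_ring_1 \<Rightarrow> 'a::ring \<Rightarrow> 'a) \<Rightarrow> ('j \<Rightarrow> 'a) \<Rightarrow> 'j set \<Rightarrow> 'a set" where
  "span_fam sm f K = {lincomb sm f c K | c. finite {j\<in>K. c j \<noteq> 0}}"

definition basis_of :: "('r::comm_ring_1 \<Rightarrow> 'a::ring \<Rightarrow> 'a) \<Rightarrow> ('j \<Rightarrow> 'a) \<Rightarrow> 'j set \<Rightarrow> 'a set \<Rightarrow> bool" where
  "basis_of sm f K M \<longleftrightarrow> f ` K \<subseteq> M \<and> indep_fam sm f K \<and> span_fam sm f K = M"

definition free_submodule :: "('r::comm_ring_1 \<Rightarrow> 'a::ring \<Rightarrow> 'a) \<Rightarrow> 'a set \<Rightarrow> bool" where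
  "free_submodule sm M \<longleftrightarrow> (\<exists>S\<subseteq>M. basis_of sm id S M)"

definition corner :: "('i \<Rightarrow> 'a::ring) \<Rightarrow> 'i \<Rightarrow> 'i \<Rightarrow> 'a set" where
  "corner e i i' = {e i * x * e i' | x. True}"

definition corner_direct_sum :: "('i \<Rightarrow> 'a::ring) \<Rightarrow> bool" where
  "corner_direct_sum e \<longleftrightarrow>
     (\<forall>x. \<exists>!y :: 'i \<times> 'i \<Rightarrow> 'a. finite {p. y p \<noteq> 0} \<and>
            (\<forall>i i'. y (i, i') \<in> corner e i i') \<and>
            x = (\<Sum>p\<in>{p. y p \<noteq> 0}. y p))"

definition coord :: "('r::comm_ring_1 \<Rightarrow> 'a::ring \<Rightarrow> 'a) \<Rightarrow> ('j \<Rightarrow> 'a) \<Rightarrow> 'a \<Rightarrow> 'j \<Rightarrow> 'r" where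
  "coord sm a x = (THE c. finite {j. c j \<noteq> 0} \<and> lincomb sm a c UNIV = x)"

definition ro :: "('i \<Rightarrow> 'a::ring) \<Rightarrow> ('j \<Rightarrow> 'a) \<Rightarrow> 'j \<Rightarrow> 'i" where
  "ro e a j = (THE i. e i * a j = a j)"

definition co :: "('i \<Rightarrow> 'a::ring) \<Rightarrow> ('j \<Rightarrow> 'a) \<Rightarrow> 'j \<Rightarrow> 'i" where
  "co e a j = (THE i. a j * e i = a j)"

text \<open>Formal (possibly infinite) combinations are functions 'j => 'r.\<close>
definition J_left :: "('i \<Rightarrow> 'a::ring) \<Rightarrow> ('j \<Rightarrow> 'a) \<Rightarrow> ('j \<Rightarrow> 'r::zero) \<Rightarrow> 'i \<Rightarrow> 'j set" where
  "J_left e a f i = {j. f j \<noteq> 0 \<and> ro e a j = i}"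

definition J_right :: "('i \<Rightarrow> 'a::ring) \<Rightarrow> ('j \<Rightarrow> 'a) \<Rightarrow> ('j \<Rightarrow> 'r::zero) \<Rightarrow> 'i \<Rightarrow> 'j set" where
  "J_right e a f i = {j. f j \<noteq> 0 \<and> co e a j = i}"

definition dagA :: "('i \<Rightarrow> 'a::ring) \<Rightarrow> ('j \<Rightarrow> 'a) \<Rightarrow> ('j \<Rightarrow> 'r::zero) set" where
  "dagA e a = {f. \<forall>i. finite (J_left e a f i)}"

definition Adag :: "('i \<Rightarrow> 'a::ring) \<Rightarrow> ('j \<Rightarrow> 'a) \<Rightarrow> ('j \<Rightarrow> 'r::zero) set" where
  "Adag e a = {f. \<forall>i. finite (J_right e a f i)}"

definition Ahat :: "('i \<Rightarrow> 'a::ring) \<Rightarrow> ('j \<Rightarrow> 'a) \<Rightarrow> ('j \<Rightarrow> 'r::zero) set" where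
  "Ahat e a = dagA e a \<inter> Adag e a"

definition prod_pairs :: "('r::comm_ring_1 \<Rightarrow> 'a::ring \<Rightarrow> 'a) \<Rightarrow> ('j \<Rightarrow> 'a) \<Rightarrow> ('j \<Rightarrow> 'r) \<Rightarrow> ('j \<Rightarrow> 'r) \<Rightarrow> 'j \<Rightarrow> ('j \<times> 'j) set" where
  "prod_pairs sm a f g u = {(s, t). f s \<noteq> 0 \<and> g t \<noteq> 0 \<and> coord sm a (a s * a t) u \<noteq> 0}"

definition hprod :: "('r::comm_ring_1 \<Rightarrow> 'a::ring \<Rightarrow> 'a) \<Rightarrow> ('j \<Rightarrow> 'a) \<Rightarrow> ('j \<Rightarrow> 'r) \<Rightarrow> ('j \<Rightarrow> 'r) \<Rightarrow> 'j \<Rightarrow> 'r" where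
  "hprod sm a f g u = (\<Sum>(s, t)\<in>prod_pairs sm a f g u. f s * g t * coord sm a (a s * a t) u)"

text \<open>The element 1 = sum of all e_i.\<close>
definition hone :: "('i \<Rightarrow> 'a::ring) \<Rightarrow> ('j \<Rightarrow> 'a) \<Rightarrow> 'j \<Rightarrow> 'r::comm_ring_1" where
  "hone e a j = (if \<exists>i. a j = e i then 1 else 0)"

text \<open>S is an R-submodule of the formal combinations on which the product is well defined
  (all coefficient sums finite) and closed, giving an associative R-algebra with identity hone.\<close>
definition unital_completion_algebra ::
  "('r::comm_ring_1 \<Rightarrow> 'a::ring \<Rightarrow> 'a) \<Rightarrow> ('j \<Rightarrow> 'a) \<Rightarrow> ('i \<Rightarrow> 'a) \<Rightarrow> ('j \<Rightarrow> 'r) set \<Rightarrow> bool" where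
  "unital_completion_algebra sm a e S \<longleftrightarrow>
     (\<lambda>_. 0) \<in> S \<and>
     (\<forall>f\<in>S. \<forall>g\<in>S. (\<lambda>j. f j + g j) \<in> S) \<and>
     (\<forall>r. \<forall>f\<in>S. (\<lambda>j. r * f j) \<in> S) \<and>
     (\<forall>f\<in>S. \<forall>g\<in>S. (\<forall>u. finite (prod_pairs sm a f g u)) \<and> hprod sm a f g \<in> S) \<and>
     (\<forall>f\<in>S. \<forall>g\<in>S. \<forall>h\<in>S. hprod sm a (hprod sm a f g) h = hprod sm a f (hprod sm a g h)) \<and>
     (\<forall>f\<in>S. \<forall>g\<in>S. \<forall>h\<in>S. hprod sm a (\<lambda>j. f j + g j) h = (\<lambda>j. hprod sm a f h j + hprod sm a g h j)) \<and>
     (\<forall>f\<in>S. \<forall>g\<in>S. \<forall>h\<in>S. hprod sm a f (\<lambda>j. g j + h j) = (\<lambda>j. hprod sm a f g j + hprod sm a f h j)) \<and>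
     (\<forall>r. \<forall>f\<in>S. \<forall>g\<in>S. hprod sm a (\<lambda>j. r * f j) g = (\<lambda>j. r * hprod sm a f g j)) \<and>
     (\<forall>r. \<forall>f\<in>S. \<forall>g\<in>S. hprod sm a f (\<lambda>j. r * g j) = (\<lambda>j. r * hprod sm a f g j)) \<and>
     hone e a \<in> S \<and>
     (\<forall>f\<in>S. hprod sm a (hone e a) f = f \<and> hprod sm a f (hone e a) = f)"

end

theory Submission
  imports Defs
begin

text \<open>
  The a_u-coefficient of a product only involves pairs (s, t) with ro s = ro u, ro t = co s and
  co t = co u. Hence, for factors in the row-finite (column-finite) completion, each coefficient of a
  product, and of a triple product, depends only on finitely supported truncations of the factors,
  obtained by restricting to finitely many rows (columns). On finitely supported coefficient vectors
  the product is the coordinate vector of the product in A, so associativity is inherited from A.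
  The identity works because e_i a_j is a_j or 0 according as ro j = i or not.
\<close>

locale algebra_basis =
  fixes sm :: "'r::comm_ring_1 \<Rightarrow> 'a::ring \<Rightarrow> 'a" and a :: "'j \<Rightarrow> 'a"
  assumes algebra: "algebra_over sm"
    and basis: "basis_of sm a UNIV UNIV"
begin

lemma sm_add_left: "sm (r + s) x = sm r x + sm s x"
  and sm_add_right: "sm r (x + y) = sm r x + sm r y"
  and sm_sm: "sm (r * s) x = sm r (sm s x)"
  and sm_one: "sm 1 x = x"
  and sm_mult_left: "sm r (x * y) = sm r x * y"
  and sm_mult_right: "sm r (x * y) = x * sm r y"
  using algebra unfolding algebra_over_def by blast+

lemma sm_zero_left [simp]: "sm 0 x = 0"
  using sm_add_left[of 0 0 x] by simp

lemma sm_zero_right [simp]: "sm r 0 = 0"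
  using sm_add_right[of r 0 0] by simp

lemma sm_diff_left: "sm (r - s) x = sm r x - sm s x"
  using sm_add_left[of "r - s" s x] by (simp add: algebra_simps)

lemma sm_sum_right: "sm r (\<Sum>w\<in>W. z w) = (\<Sum>w\<in>W. sm r (z w))"
  by (induction W rule: infinite_finite_induct) (auto simp: sm_add_right)

lemma sm_mult_sm: "sm r x * sm s y = sm (r * s) (x * y)"
  by (metis sm_sm sm_mult_left sm_mult_right)

lemma lincomb_eq_sum:
  assumes "finite W" "{j. c j \<noteq> 0} \<subseteq> W"
  shows "lincomb sm a c UNIV = (\<Sum>w\<in>W. sm (c w) (a w))"
  unfolding lincomb_def using assms by (intro sum.mono_neutral_left) auto

lemma lincomb_unique:
  assumes c: "finite {j. c j \<noteq> 0}" and d: "finite {j. d j \<noteq> 0}"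
    and eq: "lincomb sm a c UNIV = lincomb sm a d UNIV"
  shows "c = d"
proof -
  let ?W = "{j. c j \<noteq> 0} \<union> {j. d j \<noteq> 0}"
  have W: "finite ?W" using c d by simp
  have "lincomb sm a (\<lambda>j. c j - d j) UNIV = (\<Sum>w\<in>?W. sm (c w) (a w)) - (\<Sum>w\<in>?W. sm (d w) (a w))"
    by (subst lincomb_eq_sum[OF W]) (auto simp: sm_diff_left sum_subtractf)
  also have "\<dots> = 0"
    using eq lincomb_eq_sum[OF W, of c] lincomb_eq_sum[OF W, of d] by auto
  finally have "lincomb sm a (\<lambda>j. c j - d j) UNIV = 0" .
  moreover have "finite {j\<in>UNIV. c j - d j \<noteq> 0}"
    by (rule finite_subset[OF _ W]) auto
  moreover have "indep_fam sm a UNIV" using basis by (simp add: basis_of_def)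
  ultimately show ?thesis
    unfolding indep_fam_def by (auto dest!: spec[of _ "\<lambda>j. c j - d j"])
qed

lemma coord_eqI:
  assumes "finite {j. c j \<noteq> 0}" "lincomb sm a c UNIV = x"
  shows "coord sm a x = c"
  unfolding coord_def
proof (rule the_equality)
  fix d assume "finite {j. d j \<noteq> 0} \<and> lincomb sm a d UNIV = x"
  then show "d = c" using lincomb_unique[of d c] assms by auto
qed (use assms in auto)

lemma coord_exists: "\<exists>c. finite {j. c j \<noteq> 0} \<and> lincomb sm a c UNIV = x"
proof -
  have "x \<in> span_fam sm a UNIV" using basis unfolding basis_of_def by simp
  then show ?thesis unfolding span_fam_def by auto
qed

lemma finite_coord_support: "finite {w. coord sm a x w \<noteq> 0}"
  and lincomb_coord: "lincomb sm a (coord sm a x) UNIV = x"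
  using coord_exists[of x] coord_eqI by metis+

lemma coord_expansion:
  assumes "finite W" "{w. coord sm a x w \<noteq> 0} \<subseteq> W"
  shows "x = (\<Sum>w\<in>W. sm (coord sm a x w) (a w))"
  using lincomb_eq_sum[OF assms] lincomb_coord by simp

lemma coord_add: "coord sm a (x + y) w = coord sm a x w + coord sm a y w"
proof -
  let ?W = "{w. coord sm a x w \<noteq> 0} \<union> {w. coord sm a y w \<noteq> 0}"
  have W: "finite ?W" using finite_coord_support by simp
  have "coord sm a (x + y) = (\<lambda>w. coord sm a x w + coord sm a y w)"
  proof (rule coord_eqI)
    show "finite {j. coord sm a x j + coord sm a y j \<noteq> 0}"
      by (rule finite_subset[OF _ W]) auto
    have "lincomb sm a (\<lambda>w. coord sm a x w + coord sm a y w) UNIV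
        = (\<Sum>w\<in>?W. sm (coord sm a x w) (a w)) + (\<Sum>w\<in>?W. sm (coord sm a y w) (a w))"
      by (subst lincomb_eq_sum[OF W]) (auto simp: sm_add_left sum.distrib)
    also have "\<dots> = x + y"
      using coord_expansion[OF W, of x] coord_expansion[OF W, of y] by auto
    finally show "lincomb sm a (\<lambda>w. coord sm a x w + coord sm a y w) UNIV = x + y" .
  qed
  then show ?thesis by simp
qed

lemma coord_sm: "coord sm a (sm r x) w = r * coord sm a x w"
proof -
  let ?W = "{w. coord sm a x w \<noteq> 0}"
  have W: "finite ?W" by (rule finite_coord_support)
  have "coord sm a (sm r x) = (\<lambda>w. r * coord sm a x w)"
  proof (rule coord_eqI)
    show "finite {j. r * coord sm a x j \<noteq> 0}"
      by (rule finite_subset[OF _ W]) auto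
    have "lincomb sm a (\<lambda>w. r * coord sm a x w) UNIV = (\<Sum>w\<in>?W. sm (r * coord sm a x w) (a w))"
      by (rule lincomb_eq_sum[OF W]) auto
    also have "\<dots> = sm r (\<Sum>w\<in>?W. sm (coord sm a x w) (a w))"
      by (simp only: sm_sum_right sm_sm)
    finally show "lincomb sm a (\<lambda>w. r * coord sm a x w) UNIV = sm r x"
      by (simp only: coord_expansion[OF W order_refl, symmetric])
  qed
  then show ?thesis by simp
qed

lemma coord_zero [simp]: "coord sm a 0 w = 0"
  by (metis coord_sm mult_zero_left sm_zero_left)

lemma coord_sum: "coord sm a (\<Sum>w\<in>W. z w) v = (\<Sum>w\<in>W. coord sm a (z w) v)"
  by (induction W rule: infinite_finite_induct) (auto simp: coord_add)

lemma coord_basis: "coord sm a (a v) w = (if w = v then 1 else 0)"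
proof -
  have "coord sm a (a v) = (\<lambda>w. if w = v then 1 else 0)"
  proof (rule coord_eqI)
    have "lincomb sm a (\<lambda>w. if w = v then 1 else 0) UNIV = (\<Sum>w\<in>{v}. sm (if w = v then 1 else 0) (a w))"
      by (rule lincomb_eq_sum) auto
    then show "lincomb sm a (\<lambda>w. if w = v then 1 else 0) UNIV = a v" by (simp add: sm_one)
  qed simp
  then show ?thesis by simp
qed

lemma hprod_eq_sum:
  assumes "finite X" "finite Y" "prod_pairs sm a f g u \<subseteq> X \<times> Y"
  shows "hprod sm a f g u = (\<Sum>s\<in>X. \<Sum>t\<in>Y. f s * g t * coord sm a (a s * a t) u)"
proof -
  have "hprod sm a f g u = (\<Sum>(s, t)\<in>X \<times> Y. f s * g t * coord sm a (a s * a t) u)"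
    unfolding hprod_def
    by (rule sum.mono_neutral_left) (use assms in \<open>auto simp: prod_pairs_def\<close>)
  then show ?thesis by (simp add: sum.cartesian_product)
qed

lemma hprod_nonzeroE:
  assumes "hprod sm a f g u \<noteq> 0"
  obtains s t where "f s \<noteq> 0" "g t \<noteq> 0" "coord sm a (a s * a t) u \<noteq> 0"
proof -
  have "prod_pairs sm a f g u \<noteq> {}" using assms unfolding hprod_def by auto
  then show thesis using that unfolding prod_pairs_def by auto
qed

lemma hprod_finite_support:
  assumes f: "finite {s. f s \<noteq> 0}" and g: "finite {t. g t \<noteq> 0}"
  shows "hprod sm a f g = coord sm a (lincomb sm a f UNIV * lincomb sm a g UNIV)"
proof
  fix u
  let ?X = "{s. f s \<noteq> 0}" and ?Y = "{t. g t \<noteq> 0}"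
  have "lincomb sm a f UNIV * lincomb sm a g UNIV
      = (\<Sum>s\<in>?X. \<Sum>t\<in>?Y. sm (f s * g t) (a s * a t))"
    by (simp add: lincomb_eq_sum[OF f] lincomb_eq_sum[OF g] sum_product sm_mult_sm)
  then have "coord sm a (lincomb sm a f UNIV * lincomb sm a g UNIV) u
      = (\<Sum>s\<in>?X. \<Sum>t\<in>?Y. f s * g t * coord sm a (a s * a t) u)"
    by (simp add: coord_sum coord_sm)
  also have "\<dots> = hprod sm a f g u"
    by (rule hprod_eq_sum[symmetric]) (use f g in \<open>auto simp: prod_pairs_def\<close>)
  finally show "hprod sm a f g u = coord sm a (lincomb sm a f UNIV * lincomb sm a g UNIV) u" ..
qed

lemma hprod_assoc_finite_support:
  assumes f: "finite {s. f s \<noteq> 0}" and g: "finite {t. g t \<noteq> 0}" and h: "finite {v. h v \<noteq> 0}"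
  shows "hprod sm a (hprod sm a f g) h = hprod sm a f (hprod sm a g h)"
  using hprod_finite_support[OF f g] hprod_finite_support[OF g h]
    hprod_finite_support[OF finite_coord_support h] hprod_finite_support[OF f finite_coord_support]
  by (simp add: lincomb_coord mult.assoc)

lemma finite_support_hprod:
  assumes "finite {s. f s \<noteq> 0}" "finite {t. g t \<noteq> 0}"
  shows "finite {u. hprod sm a f g u \<noteq> 0}"
  using hprod_finite_support[OF assms] finite_coord_support by simp

lemma hprod_cong:
  assumes "\<And>s t. f s \<noteq> 0 \<or> f' s \<noteq> 0 \<Longrightarrow> g t \<noteq> 0 \<or> g' t \<noteq> 0 \<Longrightarrow>
      coord sm a (a s * a t) u \<noteq> 0 \<Longrightarrow> f s = f' s \<and> g t = g' t"
  shows "hprod sm a f g u = hprod sm a f' g' u"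
proof -
  have "prod_pairs sm a f g u = prod_pairs sm a f' g' u"
    unfolding prod_pairs_def using assms by fastforce
  moreover have "f s * g t = f' s * g' t" if "(s, t) \<in> prod_pairs sm a f' g' u" for s t
    using that assms[of s t] unfolding prod_pairs_def by auto
  ultimately show ?thesis
    unfolding hprod_def by (intro sum.cong) auto
qed

lemma hprod_add_left:
  assumes "finite (prod_pairs sm a f h u)" "finite (prod_pairs sm a g h u)"
    "finite (prod_pairs sm a (\<lambda>j. f j + g j) h u)"
  shows "hprod sm a (\<lambda>j. f j + g j) h u = hprod sm a f h u + hprod sm a g h u"
proof -
  let ?P = "prod_pairs sm a f h u \<union> prod_pairs sm a g h u \<union> prod_pairs sm a (\<lambda>j. f j + g j) h u"
  have fin: "finite (fst ` ?P)" "finite (snd ` ?P)" using assms by auto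
  have "?P \<subseteq> fst ` ?P \<times> snd ` ?P" by force
  then show ?thesis
    by (simp add: hprod_eq_sum[OF fin] sum.distrib distrib_right)
qed

lemma hprod_add_right:
  assumes "finite (prod_pairs sm a f g u)" "finite (prod_pairs sm a f h u)"
    "finite (prod_pairs sm a f (\<lambda>j. g j + h j) u)"
  shows "hprod sm a f (\<lambda>j. g j + h j) u = hprod sm a f g u + hprod sm a f h u"
proof -
  let ?P = "prod_pairs sm a f g u \<union> prod_pairs sm a f h u \<union> prod_pairs sm a f (\<lambda>j. g j + h j) u"
  have fin: "finite (fst ` ?P)" "finite (snd ` ?P)" using assms by auto
  have "?P \<subseteq> fst ` ?P \<times> snd ` ?P" by force
  then show ?thesis
    by (simp add: hprod_eq_sum[OF fin] sum.distrib distrib_left distrib_right)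
qed

lemma hprod_scale_left:
  assumes "finite (prod_pairs sm a f g u)"
  shows "hprod sm a (\<lambda>j. r * f j) g u = r * hprod sm a f g u"
proof -
  let ?P = "prod_pairs sm a f g u"
  have fin: "finite (fst ` ?P)" "finite (snd ` ?P)" using assms by auto
  have "prod_pairs sm a (\<lambda>j. r * f j) g u \<subseteq> ?P" "?P \<subseteq> fst ` ?P \<times> snd ` ?P"
    unfolding prod_pairs_def by force+
  then show ?thesis
    by (simp add: hprod_eq_sum[OF fin] sum_distrib_left mult.assoc)
qed

lemma hprod_scale_right:
  assumes "finite (prod_pairs sm a f g u)"
  shows "hprod sm a f (\<lambda>j. r * g j) u = r * hprod sm a f g u"
proof -
  let ?P = "prod_pairs sm a f g u"
  have fin: "finite (fst ` ?P)" "finite (snd ` ?P)" using assms by auto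
  have "prod_pairs sm a f (\<lambda>j. r * g j) u \<subseteq> ?P" "?P \<subseteq> fst ` ?P \<times> snd ` ?P"
    unfolding prod_pairs_def by force+
  then show ?thesis
    by (simp add: hprod_eq_sum[OF fin] sum_distrib_left mult_ac)
qed

end

definition restrict_rows ::
    "('i \<Rightarrow> 'a::ring) \<Rightarrow> ('j \<Rightarrow> 'a) \<Rightarrow> 'i set \<Rightarrow> ('j \<Rightarrow> 'r::zero) \<Rightarrow> 'j \<Rightarrow> 'r" where
  "restrict_rows e a K f j = (if ro e a j \<in> K then f j else 0)"

definition restrict_cols ::
    "('i \<Rightarrow> 'a::ring) \<Rightarrow> ('j \<Rightarrow> 'a) \<Rightarrow> 'i set \<Rightarrow> ('j \<Rightarrow> 'r::zero) \<Rightarrow> 'j \<Rightarrow> 'r" where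
  "restrict_cols e a K f j = (if co e a j \<in> K then f j else 0)"

lemma J_left_eq_support: "J_left e a f i = {j. restrict_rows e a {i} f j \<noteq> 0}"
  by (auto simp: J_left_def restrict_rows_def)

lemma J_right_eq_support: "J_right e a f i = {j. restrict_cols e a {i} f j \<noteq> 0}"
  by (auto simp: J_right_def restrict_cols_def)

lemma dagA_support_mono:
  assumes "f \<in> dagA e a" "g \<in> dagA e a" "\<And>j. h j \<noteq> 0 \<Longrightarrow> f j \<noteq> 0 \<or> g j \<noteq> 0"
  shows "h \<in> dagA e a"
  unfolding dagA_def
proof (intro CollectI allI)
  fix i
  have "J_left e a h i \<subseteq> J_left e a f i \<union> J_left e a g i"
    using assms(3) unfolding J_left_def by blast
  moreover have "finite (J_left e a f i \<union> J_left e a g i)"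
    using assms(1,2) unfolding dagA_def by simp
  ultimately show "finite (J_left e a h i)" by (rule finite_subset)
qed

lemma Adag_support_mono:
  assumes "f \<in> Adag e a" "g \<in> Adag e a" "\<And>j. h j \<noteq> 0 \<Longrightarrow> f j \<noteq> 0 \<or> g j \<noteq> 0"
  shows "h \<in> Adag e a"
  unfolding Adag_def
proof (intro CollectI allI)
  fix i
  have "J_right e a h i \<subseteq> J_right e a f i \<union> J_right e a g i"
    using assms(3) unfolding J_right_def by blast
  moreover have "finite (J_right e a f i \<union> J_right e a g i)"
    using assms(1,2) unfolding Adag_def by simp
  ultimately show "finite (J_right e a h i)" by (rule finite_subset)
qed

lemma zero_in_dagA: "(\<lambda>_. 0) \<in> dagA e a"
  and zero_in_Adag: "(\<lambda>_. 0) \<in> Adag e a"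
  unfolding dagA_def Adag_def J_left_def J_right_def by simp_all

lemma dagA_add:
  "(f :: 'j \<Rightarrow> 'r::monoid_add) \<in> dagA e a \<Longrightarrow> g \<in> dagA e a \<Longrightarrow> (\<lambda>j. f j + g j) \<in> dagA e a"
  by (rule dagA_support_mono[where f = f and g = g]) auto

lemma Adag_add:
  "(f :: 'j \<Rightarrow> 'r::monoid_add) \<in> Adag e a \<Longrightarrow> g \<in> Adag e a \<Longrightarrow> (\<lambda>j. f j + g j) \<in> Adag e a"
  by (rule Adag_support_mono[where f = f and g = g]) auto

lemma dagA_scale:
  "(f :: 'j \<Rightarrow> 'r::mult_zero) \<in> dagA e a \<Longrightarrow> (\<lambda>j. r * f j) \<in> dagA e a"
  by (rule dagA_support_mono) auto

lemma Adag_scale: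
  "(f :: 'j \<Rightarrow> 'r::mult_zero) \<in> Adag e a \<Longrightarrow> (\<lambda>j. r * f j) \<in> Adag e a"
  by (rule Adag_support_mono) auto

lemma finite_support_restrict_rows:
  assumes "f \<in> dagA e a" "finite K"
  shows "finite {j. restrict_rows e a K f j \<noteq> 0}"
proof (rule finite_subset)
  show "{j. restrict_rows e a K f j \<noteq> 0} \<subseteq> (\<Union>i\<in>K. J_left e a f i)"
    unfolding restrict_rows_def J_left_def by (auto split: if_splits)
  show "finite (\<Union>i\<in>K. J_left e a f i)" using assms unfolding dagA_def by blast
qed

lemma finite_support_restrict_cols:
  assumes "f \<in> Adag e a" "finite K"
  shows "finite {j. restrict_cols e a K f j \<noteq> 0}"
proof (rule finite_subset)
  show "{j. restrict_cols e a K f j \<noteq> 0} \<subseteq> (\<Union>i\<in>K. J_right e a f i)"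
    unfolding restrict_cols_def J_right_def by (auto split: if_splits)
  show "finite (\<Union>i\<in>K. J_right e a f i)" using assms unfolding Adag_def by blast
qed

locale idempotent_basis = algebra_basis sm a
  for sm :: "'r::comm_ring_1 \<Rightarrow> 'a::ring \<Rightarrow> 'a" and a :: "'j \<Rightarrow> 'a" +
  fixes e :: "'i \<Rightarrow> 'a"
  assumes idempotent: "e i * e i = e i"
    and orthogonal: "i \<noteq> i' \<Longrightarrow> e i * e i' = 0"
    and basis_in_corners: "\<exists>i i' k. a j = e i * a k * e i'"
    and idempotent_in_basis: "e i \<in> range a"
    and nontrivial: "(1::'r) \<noteq> 0"
begin

lemma basis_inj: "inj a"
proof (rule injI)
  fix x y assume "a x = a y"
  then have "coord sm a (a x) x = coord sm a (a y) x" by simp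
  then show "x = y" using nontrivial by (auto simp: coord_basis split: if_splits)
qed

lemma basis_nonzero: "a j \<noteq> 0"
  using nontrivial coord_basis[of j j] by auto

lemma row_unique: "e i * a j = a j \<Longrightarrow> e i' * a j = a j \<Longrightarrow> i = i'"
  by (metis basis_nonzero mult.assoc mult_zero_left orthogonal)

lemma col_unique: "a j * e i = a j \<Longrightarrow> a j * e i' = a j \<Longrightarrow> i = i'"
  by (metis basis_nonzero mult.assoc mult_zero_right orthogonal)

lemma ro_mult_basis: "e (ro e a j) * a j = a j"
proof -
  obtain i i' k where "a j = e i * a k * e i'" using basis_in_corners by blast
  then have i: "e i * a j = a j" by (simp add: idempotent flip: mult.assoc)
  show ?thesis unfolding ro_def by (rule theI[where P = "\<lambda>i. e i * a j = a j", OF i]) (use row_unique i in blast)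
qed

lemma basis_mult_co: "a j * e (co e a j) = a j"
proof -
  obtain i i' k where "a j = e i * a k * e i'" using basis_in_corners by blast
  then have i': "a j * e i' = a j" by (simp add: idempotent mult.assoc)
  show ?thesis unfolding co_def by (rule theI[where P = "\<lambda>i. a j * e i = a j", OF i']) (use col_unique i' in blast)
qed

lemma ro_eqI: "e i * a j = a j \<Longrightarrow> ro e a j = i"
  using ro_mult_basis row_unique by blast

lemma co_eqI: "a j * e i = a j \<Longrightarrow> co e a j = i"
  using basis_mult_co col_unique by blast

lemma idempotent_mult_basis: "e i * a j = (if ro e a j = i then a j else 0)"
  by (metis ro_mult_basis mult.assoc mult_zero_left orthogonal)

lemma basis_mult_idempotent: "a j * e i = (if co e a j = i then a j else 0)"
  by (metis basis_mult_co mult.assoc mult_zero_right orthogonal)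

lemma ro_idempotent: "a j = e i \<Longrightarrow> ro e a j = i"
  and co_idempotent: "a j = e i \<Longrightarrow> co e a j = i"
  by (simp_all add: ro_eqI co_eqI idempotent)

lemma coord_idempotent_mult: "coord sm a (e i * x) v = (if ro e a v = i then coord sm a x v else 0)"
proof -
  let ?W = "{w. coord sm a x w \<noteq> 0}"
  have W: "finite ?W" by (rule finite_coord_support)
  have "e i * x = (\<Sum>w\<in>?W. sm (coord sm a x w) (e i * a w))"
    by (subst coord_expansion[OF W order_refl]) (simp add: sum_distrib_left sm_mult_right)
  then have "coord sm a (e i * x) v = (\<Sum>w\<in>?W. if w = v \<and> ro e a v = i then coord sm a x v else 0)"
    by (auto simp: coord_sum coord_sm idempotent_mult_basis coord_basis intro!: sum.cong)
  also have "\<dots> = (if ro e a v = i then coord sm a x v else 0)"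
    using W by (cases "coord sm a x v = 0") (auto simp: sum.delta)
  finally show ?thesis .
qed

lemma coord_mult_idempotent: "coord sm a (x * e i) v = (if co e a v = i then coord sm a x v else 0)"
proof -
  let ?W = "{w. coord sm a x w \<noteq> 0}"
  have W: "finite ?W" by (rule finite_coord_support)
  have "x * e i = (\<Sum>w\<in>?W. sm (coord sm a x w) (a w * e i))"
    by (subst coord_expansion[OF W order_refl]) (simp add: sum_distrib_right sm_mult_left)
  then have "coord sm a (x * e i) v = (\<Sum>w\<in>?W. if w = v \<and> co e a v = i then coord sm a x v else 0)"
    by (auto simp: coord_sum coord_sm basis_mult_idempotent coord_basis intro!: sum.cong)
  also have "\<dots> = (if co e a v = i then coord sm a x v else 0)"
    using W by (cases "coord sm a x v = 0") (auto simp: sum.delta)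
  finally show ?thesis .
qed

lemma coord_basis_mult_nonzero:
  assumes "coord sm a (a s * a t) u \<noteq> 0"
  shows "ro e a u = ro e a s" and "co e a u = co e a t" and "ro e a t = co e a s"
proof -
  have "a s * a t = e (ro e a s) * (a s * a t)"
    using ro_mult_basis[of s] by (simp flip: mult.assoc)
  with assms show "ro e a u = ro e a s"
    by (metis coord_idempotent_mult)
  have "a s * a t = (a s * a t) * e (co e a t)"
    using basis_mult_co[of t] by (simp add: mult.assoc)
  with assms show "co e a u = co e a t"
    by (metis coord_mult_idempotent)
  show "ro e a t = co e a s"
  proof (rule ccontr)
    assume "ro e a t \<noteq> co e a s"
    then have "a s * a t = 0"
      by (metis basis_mult_co idempotent_mult_basis mult.assoc mult_zero_right)
    with assms show False by simp
  qed
qed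

lemma hprod_nonzero_support:
  assumes "hprod sm a f g u \<noteq> 0"
  shows "\<exists>s. f s \<noteq> 0 \<and> ro e a s = ro e a u" and "\<exists>t. g t \<noteq> 0 \<and> co e a t = co e a u"
  using assms by (metis hprod_nonzeroE coord_basis_mult_nonzero)+

lemma prod_pairs_J_left:
  "(s, t) \<in> prod_pairs sm a f g u \<Longrightarrow> s \<in> J_left e a f (ro e a u) \<and> t \<in> J_left e a g (co e a s)"
  unfolding prod_pairs_def J_left_def by (auto dest: coord_basis_mult_nonzero)

lemma prod_pairs_J_right:
  "(s, t) \<in> prod_pairs sm a f g u \<Longrightarrow> t \<in> J_right e a g (co e a u) \<and> s \<in> J_right e a f (ro e a t)"
  unfolding prod_pairs_def J_right_def by (auto dest: coord_basis_mult_nonzero)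

lemma finite_prod_pairs_dagA:
  assumes "f \<in> dagA e a" "g \<in> dagA e a"
  shows "finite (prod_pairs sm a f g u)"
proof (rule finite_subset)
  show "prod_pairs sm a f g u \<subseteq> Sigma (J_left e a f (ro e a u)) (\<lambda>s. J_left e a g (co e a s))"
    using prod_pairs_J_left by fast
  show "finite (Sigma (J_left e a f (ro e a u)) (\<lambda>s. J_left e a g (co e a s)))"
    using assms unfolding dagA_def by auto
qed

lemma finite_prod_pairs_Adag:
  assumes "f \<in> Adag e a" "g \<in> Adag e a"
  shows "finite (prod_pairs sm a f g u)"
proof (rule finite_subset)
  show "prod_pairs sm a f g u \<subseteq> prod.swap ` Sigma (J_right e a g (co e a u)) (\<lambda>t. J_right e a f (ro e a t))"
    using prod_pairs_J_right by (fastforce simp: image_iff)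
  show "finite (prod.swap ` Sigma (J_right e a g (co e a u)) (\<lambda>t. J_right e a f (ro e a t)))"
    using assms unfolding Adag_def by auto
qed

lemma hone_nonzero: "hone e a j \<noteq> (0::'r) \<Longrightarrow> a j = e (ro e a j) \<and> a j = e (co e a j)"
  unfolding hone_def by (auto simp: ro_idempotent co_idempotent split: if_splits)

lemma hone_in_dagA: "(hone e a :: 'j \<Rightarrow> 'r) \<in> dagA e a"
  and hone_in_Adag: "(hone e a :: 'j \<Rightarrow> 'r) \<in> Adag e a"
proof -
  have fin: "finite (a -` {e i})" for i
    using basis_inj by (simp add: finite_vimageI)
  have "J_left e a (hone e a :: 'j \<Rightarrow> 'r) i \<subseteq> a -` {e i}"
    and "J_right e a (hone e a :: 'j \<Rightarrow> 'r) i \<subseteq> a -` {e i}" for i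
    unfolding J_left_def J_right_def using hone_nonzero by force+
  then show "(hone e a :: 'j \<Rightarrow> 'r) \<in> dagA e a" "(hone e a :: 'j \<Rightarrow> 'r) \<in> Adag e a"
    unfolding dagA_def Adag_def using finite_subset[OF _ fin] by blast+
qed

lemma hprod_hone_left: "hprod sm a (hone e a) f u = f u"
proof -
  obtain s0 where s0: "a s0 = e (ro e a u)" using idempotent_in_basis by (metis rangeE)
  have "prod_pairs sm a (hone e a) f u \<subseteq> {s0} \<times> {u}"
  proof
    fix p assume "p \<in> prod_pairs sm a (hone e a) f u"
    then obtain s t where p: "p = (s, t)"
      and st: "hone e a s \<noteq> (0::'r)" "coord sm a (a s * a t) u \<noteq> 0"
      unfolding prod_pairs_def by auto
    then have "a s = e (ro e a u)" "a s = e (ro e a t)"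
      using hone_nonzero coord_basis_mult_nonzero by metis+
    then have "a s = a s0" "a s * a t = a t"
      using s0 ro_mult_basis[of t] by simp_all
    then show "p \<in> {s0} \<times> {u}"
      using p st basis_inj by (auto simp: coord_basis inj_eq split: if_splits)
  qed
  then have "hprod sm a (hone e a) f u = hone e a s0 * f u * coord sm a (a s0 * a u) u"
    using hprod_eq_sum[of "{s0}" "{u}"] by simp
  also have "\<dots> = f u"
    using s0 ro_mult_basis[of u] by (auto simp: hone_def coord_basis)
  finally show ?thesis .
qed

lemma hprod_hone_right: "hprod sm a f (hone e a) u = f u"
proof -
  obtain t0 where t0: "a t0 = e (co e a u)" using idempotent_in_basis by (metis rangeE)
  have "prod_pairs sm a f (hone e a) u \<subseteq> {u} \<times> {t0}"
  proof
    fix p assume "p \<in> prod_pairs sm a f (hone e a) u"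
    then obtain s t where p: "p = (s, t)"
      and st: "hone e a t \<noteq> (0::'r)" "coord sm a (a s * a t) u \<noteq> 0"
      unfolding prod_pairs_def by auto
    then have "a t = e (co e a u)" "a t = e (co e a s)"
      using hone_nonzero coord_basis_mult_nonzero by metis+
    then have "a t = a t0" "a s * a t = a s"
      using t0 basis_mult_co[of s] by simp_all
    then show "p \<in> {u} \<times> {t0}"
      using p st basis_inj by (auto simp: coord_basis inj_eq split: if_splits)
  qed
  then have "hprod sm a f (hone e a) u = f u * hone e a t0 * coord sm a (a u * a t0) u"
    using hprod_eq_sum[of "{u}" "{t0}"] by simp
  also have "\<dots> = f u"
    using t0 basis_mult_co[of u] by (auto simp: hone_def coord_basis)
  finally show ?thesis .
qed

lemma restrict_rows_hprod:
  "restrict_rows e a K (hprod sm a f g) = hprod sm a (restrict_rows e a K f) g"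
proof
  fix w
  show "restrict_rows e a K (hprod sm a f g) w = hprod sm a (restrict_rows e a K f) g w"
  proof (cases "ro e a w \<in> K")
    case True
    then show ?thesis
      unfolding restrict_rows_def by (auto intro!: hprod_cong dest: coord_basis_mult_nonzero)
  next
    case False
    then have "hprod sm a (restrict_rows e a K f) g w = hprod sm a (\<lambda>_. 0) g w"
      unfolding restrict_rows_def by (auto intro!: hprod_cong dest: coord_basis_mult_nonzero)
    with False show ?thesis by (simp add: restrict_rows_def hprod_def prod_pairs_def)
  qed
qed

lemma restrict_cols_hprod:
  "restrict_cols e a K (hprod sm a f g) = hprod sm a f (restrict_cols e a K g)"
proof
  fix w
  show "restrict_cols e a K (hprod sm a f g) w = hprod sm a f (restrict_cols e a K g) w"
  proof (cases "co e a w \<in> K")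
    case True
    then show ?thesis
      unfolding restrict_cols_def by (auto intro!: hprod_cong dest: coord_basis_mult_nonzero)
  next
    case False
    then have "hprod sm a f (restrict_cols e a K g) w = hprod sm a f (\<lambda>_. 0) w"
      unfolding restrict_cols_def by (auto intro!: hprod_cong dest: coord_basis_mult_nonzero)
    with False show ?thesis by (simp add: restrict_cols_def hprod_def prod_pairs_def)
  qed
qed

lemma hprod_restrict_rows_right:
  assumes "\<And>s. f s \<noteq> 0 \<Longrightarrow> co e a s \<in> K"
  shows "hprod sm a f (restrict_rows e a K g) = hprod sm a f g"
  using assms coord_basis_mult_nonzero(3)
  by (intro ext hprod_cong) (auto simp: restrict_rows_def)

lemma hprod_restrict_cols_left:
  assumes "\<And>t. g t \<noteq> 0 \<Longrightarrow> ro e a t \<in> K"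
  shows "hprod sm a (restrict_cols e a K f) g = hprod sm a f g"
  using assms coord_basis_mult_nonzero(3)[symmetric]
  by (intro ext hprod_cong) (auto simp: restrict_cols_def)

lemma hprod_in_dagA:
  assumes f: "f \<in> dagA e a" and g: "g \<in> dagA e a"
  shows "hprod sm a f g \<in> dagA e a"
  unfolding dagA_def
proof (intro CollectI allI)
  fix i
  define f1 where "f1 = restrict_rows e a {i} f"
  define g1 where "g1 = restrict_rows e a (co e a ` {s. f1 s \<noteq> 0}) g"
  have f1: "finite {s. f1 s \<noteq> 0}" using f by (simp add: f1_def finite_support_restrict_rows)
  then have g1: "finite {t. g1 t \<noteq> 0}" using g by (simp add: g1_def finite_support_restrict_rows)
  have "hprod sm a f1 g1 = hprod sm a f1 g"
    unfolding g1_def by (rule hprod_restrict_rows_right) auto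
  then have "J_left e a (hprod sm a f g) i = {w. hprod sm a f1 g1 w \<noteq> 0}"
    by (simp add: J_left_eq_support restrict_rows_hprod f1_def)
  then show "finite (J_left e a (hprod sm a f g) i)"
    using finite_support_hprod[OF f1 g1] by simp
qed

lemma hprod_in_Adag:
  assumes f: "f \<in> Adag e a" and g: "g \<in> Adag e a"
  shows "hprod sm a f g \<in> Adag e a"
  unfolding Adag_def
proof (intro CollectI allI)
  fix i
  define g1 where "g1 = restrict_cols e a {i} g"
  define f1 where "f1 = restrict_cols e a (ro e a ` {t. g1 t \<noteq> 0}) f"
  have g1: "finite {t. g1 t \<noteq> 0}" using g by (simp add: g1_def finite_support_restrict_cols)
  then have f1: "finite {s. f1 s \<noteq> 0}" using f by (simp add: f1_def finite_support_restrict_cols)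
  have "hprod sm a f1 g1 = hprod sm a f g1"
    unfolding f1_def by (rule hprod_restrict_cols_left) auto
  then have "J_right e a (hprod sm a f g) i = {w. hprod sm a f1 g1 w \<noteq> 0}"
    by (simp add: J_right_eq_support restrict_cols_hprod g1_def)
  then show "finite (J_right e a (hprod sm a f g) i)"
    using finite_support_hprod[OF f1 g1] by simp
qed

lemma hprod_assoc_dagA:
  assumes f: "f \<in> dagA e a" and g: "g \<in> dagA e a" and h: "h \<in> dagA e a"
  shows "hprod sm a (hprod sm a f g) h u = hprod sm a f (hprod sm a g h) u"
proof -
  \<comment> \<open>Only row ro u of f, the rows K1 of g reached from it and the rows K2 of h reached from
    those contribute to the u-coefficient of either side.\<close>
  define f1 where "f1 = restrict_rows e a {ro e a u} f"
  define K1 where "K1 = co e a ` {s. f1 s \<noteq> 0}"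
  define g1 where "g1 = restrict_rows e a K1 g"
  define K2 where "K2 = co e a ` {t. g1 t \<noteq> 0}"
  define h1 where "h1 = restrict_rows e a K2 h"
  have f1: "finite {s. f1 s \<noteq> 0}" using f by (simp add: f1_def finite_support_restrict_rows)
  then have g1: "finite {t. g1 t \<noteq> 0}" using g by (simp add: K1_def g1_def finite_support_restrict_rows)
  then have h1: "finite {v. h1 v \<noteq> 0}" using h by (simp add: K2_def h1_def finite_support_restrict_rows)
  have row_u: "hprod sm a F G u = hprod sm a (restrict_rows e a {ro e a u} F) G u" for F G
  proof -
    have "hprod sm a F G u = restrict_rows e a {ro e a u} (hprod sm a F G) u"
      by (simp add: restrict_rows_def)
    then show ?thesis by (simp add: restrict_rows_hprod)
  qed
  have trunc_g: "hprod sm a f1 (restrict_rows e a K1 G) = hprod sm a f1 G" for G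
    unfolding K1_def by (rule hprod_restrict_rows_right) auto
  have trunc_h: "hprod sm a F h1 = hprod sm a F h" if "\<And>w. F w \<noteq> 0 \<Longrightarrow> co e a w \<in> K2" for F
    unfolding h1_def by (rule hprod_restrict_rows_right) (use that in auto)
  have "hprod sm a (hprod sm a f g) h u = hprod sm a (hprod sm a f1 g1) h u"
    using row_u[of "hprod sm a f g" h] by (simp add: restrict_rows_hprod trunc_g f1_def[symmetric] g1_def)
  also have "\<dots> = hprod sm a (hprod sm a f1 g1) h1 u"
  proof -
    have "co e a w \<in> K2" if "hprod sm a f1 g1 w \<noteq> 0" for w
      using hprod_nonzero_support(2)[OF that] unfolding K2_def
      by (metis (mono_tags, lifting) image_eqI mem_Collect_eq)
    then show ?thesis by (simp add: trunc_h)
  qed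
  also have "\<dots> = hprod sm a f1 (hprod sm a g1 h1) u"
    by (simp add: hprod_assoc_finite_support[OF f1 g1 h1])
  also have "\<dots> = hprod sm a f1 (hprod sm a g1 h) u"
    by (subst trunc_h) (auto simp: K2_def)
  also have "\<dots> = hprod sm a f (hprod sm a g h) u"
    using row_u[of f "hprod sm a g h"] by (simp add: g1_def trunc_g flip: f1_def restrict_rows_hprod)
  finally show ?thesis .
qed

lemma hprod_assoc_Adag:
  assumes f: "f \<in> Adag e a" and g: "g \<in> Adag e a" and h: "h \<in> Adag e a"
  shows "hprod sm a (hprod sm a f g) h u = hprod sm a f (hprod sm a g h) u"
proof -
  define h1 where "h1 = restrict_cols e a {co e a u} h"
  define K1 where "K1 = ro e a ` {v. h1 v \<noteq> 0}"
  define g1 where "g1 = restrict_cols e a K1 g"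
  define K2 where "K2 = ro e a ` {t. g1 t \<noteq> 0}"
  define f1 where "f1 = restrict_cols e a K2 f"
  have h1: "finite {v. h1 v \<noteq> 0}" using h by (simp add: h1_def finite_support_restrict_cols)
  then have g1: "finite {t. g1 t \<noteq> 0}" using g by (simp add: K1_def g1_def finite_support_restrict_cols)
  then have f1: "finite {s. f1 s \<noteq> 0}" using f by (simp add: K2_def f1_def finite_support_restrict_cols)
  have col_u: "hprod sm a F G u = hprod sm a F (restrict_cols e a {co e a u} G) u" for F G
  proof -
    have "hprod sm a F G u = restrict_cols e a {co e a u} (hprod sm a F G) u"
      by (simp add: restrict_cols_def)
    then show ?thesis by (simp add: restrict_cols_hprod)
  qed
  have trunc_g: "hprod sm a (restrict_cols e a K1 F) h1 = hprod sm a F h1" for F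
    unfolding K1_def by (rule hprod_restrict_cols_left) auto
  have trunc_f: "hprod sm a f1 G = hprod sm a f G" if "\<And>w. G w \<noteq> 0 \<Longrightarrow> ro e a w \<in> K2" for G
    unfolding f1_def by (rule hprod_restrict_cols_left) (use that in auto)
  have "hprod sm a f (hprod sm a g h) u = hprod sm a f (hprod sm a g1 h1) u"
    using col_u[of f "hprod sm a g h"] by (simp add: restrict_cols_hprod trunc_g h1_def[symmetric] g1_def)
  also have "\<dots> = hprod sm a f1 (hprod sm a g1 h1) u"
  proof -
    have "ro e a w \<in> K2" if "hprod sm a g1 h1 w \<noteq> 0" for w
      using hprod_nonzero_support(1)[OF that] unfolding K2_def
      by (metis (mono_tags, lifting) image_eqI mem_Collect_eq)
    then show ?thesis by (simp add: trunc_f)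
  qed
  also have "\<dots> = hprod sm a (hprod sm a f1 g1) h1 u"
    by (simp add: hprod_assoc_finite_support[OF f1 g1 h1])
  also have "\<dots> = hprod sm a (hprod sm a f g1) h1 u"
    by (subst trunc_f) (auto simp: K2_def)
  also have "\<dots> = hprod sm a (hprod sm a f g) h u"
    using col_u[of "hprod sm a f g" h] by (simp add: g1_def trunc_g flip: h1_def restrict_cols_hprod)
  finally show ?thesis ..
qed

lemma unital_completion_algebraI:
  assumes "(\<lambda>_. 0) \<in> S"
    and "\<And>f g. f \<in> S \<Longrightarrow> g \<in> S \<Longrightarrow> (\<lambda>j. f j + g j) \<in> S"
    and "\<And>r f. f \<in> S \<Longrightarrow> (\<lambda>j. r * f j) \<in> S"
    and "\<And>f g u. f \<in> S \<Longrightarrow> g \<in> S \<Longrightarrow> finite (prod_pairs sm a f g u)"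
    and "\<And>f g. f \<in> S \<Longrightarrow> g \<in> S \<Longrightarrow> hprod sm a f g \<in> S"
    and "\<And>f g h u. f \<in> S \<Longrightarrow> g \<in> S \<Longrightarrow> h \<in> S \<Longrightarrow>
      hprod sm a (hprod sm a f g) h u = hprod sm a f (hprod sm a g h) u"
    and "hone e a \<in> S"
  shows "unital_completion_algebra sm a e S"
  using assms unfolding unital_completion_algebra_def
  by (simp add: fun_eq_iff hprod_add_left hprod_add_right hprod_scale_left hprod_scale_right
      hprod_hone_left hprod_hone_right)

lemma unital_completion_algebra_dagA: "unital_completion_algebra sm a e (dagA e a)"
  by (intro unital_completion_algebraI zero_in_dagA dagA_add dagA_scale finite_prod_pairs_dagA
      hprod_in_dagA hprod_assoc_dagA hone_in_dagA)

lemma unital_completion_algebra_Adag: "unital_completion_algebra sm a e (Adag e a)"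
  by (intro unital_completion_algebraI zero_in_Adag Adag_add Adag_scale finite_prod_pairs_Adag
      hprod_in_Adag hprod_assoc_Adag hone_in_Adag)

lemma unital_completion_algebra_Ahat: "unital_completion_algebra sm a e (Ahat e a)"
  unfolding Ahat_def
  by (intro unital_completion_algebraI)
    (auto intro: zero_in_dagA dagA_add dagA_scale finite_prod_pairs_dagA hprod_in_dagA hprod_assoc_dagA
      hone_in_dagA zero_in_Adag Adag_add Adag_scale hprod_in_Adag hone_in_Adag)

end

lemma unital_completion_algebra_trivial_ring:
  fixes sm :: "'r::comm_ring_1 \<Rightarrow> 'a::ring \<Rightarrow> 'a"
  assumes trivial: "(1::'r) = 0" and zero: "(\<lambda>_. 0) \<in> S"
  shows "unital_completion_algebra sm a e S"
proof -
  have zero_ring: "x = 0" for x :: 'r by (metis mult_1_right mult_zero_right trivial)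
  then have all: "f = g" for f g :: "'j \<Rightarrow> 'r" by (metis ext)
  then have "f \<in> S" for f using zero by metis
  then show ?thesis unfolding unital_completion_algebra_def
    by (simp add: all prod_pairs_def zero_ring)
qed

theorem lemma1p1:
  fixes sm :: "'r::comm_ring_1 \<Rightarrow> 'a::ring \<Rightarrow> 'a"
    and e :: "'i \<Rightarrow> 'a"
    and a :: "'j \<Rightarrow> 'a"
  assumes alg: "algebra_over sm"
    and idem: "\<forall>i. e i * e i = e i"
    and orth: "\<forall>i i'. i \<noteq> i' \<longrightarrow> e i * e i' = 0"
    and dsum: "corner_direct_sum e"
    and free: "\<forall>i i'. free_submodule sm (corner e i i')"
    and basis: "basis_of sm a UNIV UNIV"
    and corner_basis: "\<forall>i i'. basis_of sm (\<lambda>j. e i * a j * e i') {j. e i * a j * e i' \<noteq> 0} (corner e i i')"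
    and B_union1: "\<forall>j. \<exists>i i' k. a j = e i * a k * e i'"
    and B_union2: "\<forall>i i' k. e i * a k * e i' \<noteq> 0 \<longrightarrow> e i * a k * e i' \<in> range a"
    and e_in_B: "\<forall>i. e i \<in> range a"
  shows "unital_completion_algebra sm a e (dagA e a)
       \<and> unital_completion_algebra sm a e (Adag e a)
       \<and> unital_completion_algebra sm a e (Ahat e a)"
proof (cases "(1::'r) = 0")
  case True
  then show ?thesis
    using unital_completion_algebra_trivial_ring zero_in_dagA zero_in_Adag by (auto simp: Ahat_def)
next
  case False
  interpret idempotent_basis sm a e
    using alg basis idem orth B_union1 e_in_B False by unfold_locales auto
  show ?thesis
    using unital_completion_algebra_dagA unital_completion_algebra_Adag unital_completion_algebra_Ahat
    by blast
qed

end
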